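(* Let $K$ be a construction of an ASC-hypergraph $H$ and let $Y\in H\setminus K$. Then there is $X\in K$ with $Y\subsetneq X$ such that some $X$-superficial element $x$ (relative to $K$) satisfies $x\in Y$.
   Context: A hypergraph is a finite set $H$ of nonempty subsets of some finite set; its carrier is $\bigcup H$. For a family $F$ and set $Y$, $F_Y=\{X\in F\mid X\subseteq Y\}$. A hypergraph partition of $H$ is a partition $\{H_1,\dots,H_n\}$ ($n\ge0$) of the set $H$ with $\{\bigcup H_1,\dots,\bigcup H_n\}$ a partition of $\bigcup H$; $H$ is connected if it has exactly one hypergraph partition; the finest hypergraph partition is the unique one whose blocks are connected. $H$ is atomic if $\{x\}\in H$ for all $x\in\bigcup H$; saturated if $X_1,X_2\in H$ with $X_1\cap X_2\neq\emptyset$ imply $X_1\cup X_2\in H$. An ASC-hypergraph is one that is atomic, saturated and connected. Constructions of an atomic $H$, by induction on $|\bigcup H|$: (0) $\emptyset$ is the only construction of $\emptyset$; (1) if $|\bigcup H|\ge1$, $H$ connected, $x\in\bigcup H$, $K$ a construction of $H_{\bigcup H\setminus\{x\}}$, then $K\cup\{\bigcup H\}$ is a construction of $H$; (2) if $H$ is not connected with finest hypergraph partition $\{H_1,\dots,H_n\}$, $n\ge2$, and $K_i$ is a construction of $H_i$, then $K_1\cup\dots\cup K_n$ is a construction of $H$. For $X\in K$, an element $x\in X$ is $X$-superficial (relative to $K$) if $x\notin Z$ for every $Z\in K$ that is a proper subset of $X$. *)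

theory Defs
  imports Main
begin

definition hypergraph :: "'a set set \<Rightarrow> bool" where
  "hypergraph H \<longleftrightarrow> finite H \<and> finite (\<Union>H) \<and> (\<forall>X\<in>H. X \<noteq> {})"

definition restr :: "'a set set \<Rightarrow> 'a set \<Rightarrow> 'a set set" where
  "restr F Y = {X \<in> F. X \<subseteq> Y}"

definition hyp_partition :: "'a set set \<Rightarrow> 'a set set set \<Rightarrow> bool" where
  "hyp_partition H P \<longleftrightarrow>
     (\<forall>B\<in>P. B \<noteq> {}) \<and> \<Union>P = H \<and>
     (\<forall>B1\<in>P. \<forall>B2\<in>P. B1 \<noteq> B2 \<longrightarrow> B1 \<inter> B2 = {}) \<and>
     (\<forall>B\<in>P. \<Union>B \<noteq> {}) \<and>
     (\<Union>B\<in>P. \<Union>B) = \<Union>H \<and>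
     (\<forall>B1\<in>P. \<forall>B2\<in>P. B1 \<noteq> B2 \<longrightarrow> \<Union>B1 \<inter> \<Union>B2 = {})"

definition hconnected :: "'a set set \<Rightarrow> bool" where
  "hconnected H \<longleftrightarrow> (\<exists>!P. hyp_partition H P)"

definition finest_partition :: "'a set set \<Rightarrow> 'a set set set \<Rightarrow> bool" where
  "finest_partition H P \<longleftrightarrow> hyp_partition H P \<and> (\<forall>B\<in>P. hconnected B)"

definition atomic :: "'a set set \<Rightarrow> bool" where
  "atomic H \<longleftrightarrow> (\<forall>x\<in>\<Union>H. {x} \<in> H)"

definition saturated :: "'a set set \<Rightarrow> bool" where
  "saturated H \<longleftrightarrow> (\<forall>X1\<in>H. \<forall>X2\<in>H. X1 \<inter> X2 \<noteq> {} \<longrightarrow> X1 \<union> X2 \<in> H)"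

definition ASC :: "'a set set \<Rightarrow> bool" where
  "ASC H \<longleftrightarrow> hypergraph H \<and> atomic H \<and> saturated H \<and> hconnected H"

inductive construction :: "'a set set \<Rightarrow> 'a set set \<Rightarrow> bool" where
  empty: "construction {} {}"
| conn: "\<lbrakk> hypergraph H; atomic H; card (\<Union>H) \<ge> 1; hconnected H; x \<in> \<Union>H;
           construction (restr H (\<Union>H - {x})) K \<rbrakk>
         \<Longrightarrow> construction H (insert (\<Union>H) K)"
| disconn: "\<lbrakk> hypergraph H; atomic H; \<not> hconnected H; finest_partition H P; card P \<ge> 2;
              \<forall>B\<in>P. construction B (Kf B) \<rbrakk>
         \<Longrightarrow> construction H (\<Union>B\<in>P. Kf B)"

definition superficial :: "'a set set \<Rightarrow> 'a set \<Rightarrow> 'a \<Rightarrow> bool" where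
  "superficial K X x \<longleftrightarrow> x \<in> X \<and> (\<forall>Z\<in>K. Z \<subset> X \<longrightarrow> x \<notin> Z)"

end

theory Submission
  imports Defs
begin

text \<open>
  The claim holds for every construction K of an (atomic) hypergraph H,
  connected or not, so we prove it by induction on the construction.
  A connected step adds the carrier U of H to a construction K of the restriction of H
  to U - {x}: if x \<in> Y, then x is U-superficial because no member of K contains x;
  otherwise Y lives in the restriction and the witness for it stays superficial, since
  the new member U is not a proper subset of anything in K.
  A disconnected step takes the union of constructions of the blocks of a hypergraph
  partition: Y lies in one block, and a witness there stays superficial in the union
  because members from other blocks live in carriers disjoint from that block's carrier.
\<close>

lemma construction_subset_carrier:
  assumes "construction H K" and "Z \<in> K"
  shows "Z \<subseteq> \<Union>H"
  using assms
proof (induction arbitrary: Z rule: construction.induct)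
  case empty
  then show ?case by simp
next
  case (conn H x K)
  have "\<Union>(restr H (\<Union>H - {x})) \<subseteq> \<Union>H" by (auto simp: restr_def)
  with conn show ?case by blast
next
  case (disconn H P Kf)
  have "\<Union>P = H"
    using disconn.hyps(4) by (simp add: finest_partition_def hyp_partition_def)
  with disconn show ?case by blast
qed

lemma superficial_insert_new:
  assumes "x \<in> U" and "\<forall>Z\<in>K. x \<notin> Z"
  shows "superficial (insert U K) U x"
  using assms by (auto simp: superficial_def)

lemma superficial_insert:
  assumes "superficial K X x" and "\<not> U \<subset> X"
  shows "superficial (insert U K) X x"
  using assms by (auto simp: superficial_def)

lemma superficial_Union_disjoint:
  assumes sup: "superficial (Kf B) X x" and "B \<in> P" and "X \<in> Kf B"
    and inside: "\<And>B' Z. B' \<in> P \<Longrightarrow> Z \<in> Kf B' \<Longrightarrow> Z \<subseteq> \<Union>B'"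
    and disj: "\<forall>B1\<in>P. \<forall>B2\<in>P. B1 \<noteq> B2 \<longrightarrow> \<Union>B1 \<inter> \<Union>B2 = {}"
  shows "superficial (\<Union>B'\<in>P. Kf B') X x"
  unfolding superficial_def
proof (intro conjI ballI impI)
  show "x \<in> X" using sup by (simp add: superficial_def)
  then have xB: "x \<in> \<Union>B" using inside \<open>B \<in> P\<close> \<open>X \<in> Kf B\<close> by blast
  fix Z assume "Z \<in> (\<Union>B'\<in>P. Kf B')" and "Z \<subset> X"
  then obtain B' where B': "B' \<in> P" "Z \<in> Kf B'" by blast
  show "x \<notin> Z"
  proof
    assume "x \<in> Z"
    then have "x \<in> \<Union>B'" using inside B' by blast
    with xB disj \<open>B \<in> P\<close> B'(1) have "B' = B" by blast
    with sup B'(2) \<open>Z \<subset> X\<close> \<open>x \<in> Z\<close> show False by (auto simp: superficial_def)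
  qed
qed

lemma construction_superficial_witness:
  assumes "construction H K" and "Y \<in> H" and "Y \<notin> K"
  shows "\<exists>X\<in>K. Y \<subset> X \<and> (\<exists>x\<in>Y. superficial K X x)"
  using assms
proof (induction arbitrary: Y rule: construction.induct)
  case empty
  then show ?case by simp
next
  case (conn H x K)
  have K_avoids_x: "Z \<subseteq> \<Union>H - {x}" if "Z \<in> K" for Z
    using construction_subset_carrier[OF conn.hyps(6) that] by (auto simp: restr_def)
  show ?case
  proof (cases "x \<in> Y")
    case True
    have "Y \<subset> \<Union>H" using conn.prems by blast
    moreover have "superficial (insert (\<Union>H) K) (\<Union>H) x"
      using K_avoids_x conn.hyps(5) by (intro superficial_insert_new) blast+
    ultimately show ?thesis using True by blast
  next
    case False
    then have "Y \<in> restr H (\<Union>H - {x})" "Y \<notin> K"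
      using conn.prems by (auto simp: restr_def)
    then obtain X z where X: "X \<in> K" "Y \<subset> X" "z \<in> Y" "superficial K X z"
      using conn.IH by blast
    have "\<not> \<Union>H \<subset> X" using K_avoids_x[OF X(1)] by blast
    with X(4) have "superficial (insert (\<Union>H) K) X z" by (rule superficial_insert)
    then show ?thesis using X by blast
  qed
next
  case (disconn H P Kf)
  have hp: "hyp_partition H P" using disconn.hyps(4) by (simp add: finest_partition_def)
  obtain B where B: "B \<in> P" "Y \<in> B"
    using hp disconn.prems(1) by (auto simp: hyp_partition_def)
  have "Y \<notin> Kf B" using disconn.prems(2) B(1) by blast
  with bspec[OF disconn.IH B(1)] B(2)
  have "\<exists>X\<in>Kf B. Y \<subset> X \<and> (\<exists>x\<in>Y. superficial (Kf B) X x)" by simp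
  then obtain X z where X: "X \<in> Kf B" "Y \<subset> X" "z \<in> Y" "superficial (Kf B) X z"
    by blast
  have "superficial (\<Union>B'\<in>P. Kf B') X z"
  proof (rule superficial_Union_disjoint[where Kf = Kf, OF X(4) B(1) X(1)])
    show "Z \<subseteq> \<Union>B'" if "B' \<in> P" "Z \<in> Kf B'" for B' Z
    proof -
      have "construction B' (Kf B')" using bspec[OF disconn.IH \<open>B' \<in> P\<close>] by simp
      then show ?thesis using \<open>Z \<in> Kf B'\<close> by (rule construction_subset_carrier)
    qed
    show "\<forall>B1\<in>P. \<forall>B2\<in>P. B1 \<noteq> B2 \<longrightarrow> \<Union>B1 \<inter> \<Union>B2 = {}"
      using hp unfolding hyp_partition_def by (elim conjE)
  qed
  then show ?case using X B by blast
qed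

text \<open>Lemma 6.14.\<close>
theorem lemma6p14:
  fixes H K :: "'a set set" and Y :: "'a set"
  assumes "ASC H"
    and "construction H K"
    and "Y \<in> H" and "Y \<notin> K"
  shows "\<exists>X\<in>K. Y \<subset> X \<and> (\<exists>x\<in>Y. superficial K X x)"
  using construction_superficial_witness[OF assms(2-4)] .

end
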